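(* Let $\mathcal{P}$ be a fixed hyper-prior, $\delta>0$ and $\lambda>0$ fixed. Then with probability at least $1-\delta$ over the sampling of $S_1,\dots,S_n$, simultaneously for all hyper-posteriors $\mathcal{Q}$ and all posteriors $Q_1,\dots,Q_n$, $$-\frac M\lambda\log\Big(1-\mathcal{R}^S+\mathcal{R}^S e^{-\lambda/M}\Big)\;\le\;\widehat{\mathcal{R}}^S+\frac{\mathrm{KL}(\mathfrak{Q}\|\mathfrak{P})+\log\frac1\delta}{\lambda},$$ where $M=\sum_{i=1}^n m_i$, $\mathcal{R}^S=\sum_{i=1}^n\frac{m_i}{M}\mathcal{R}_i(Q_i)$ and $\widehat{\mathcal{R}}^S=\sum_{i=1}^n\frac{m_i}{M}\widehat{\mathcal{R}}_i(Q_i)$.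
   Context: Multi-task setting: $n$ tasks; task $i$ has an unknown distribution $D_i$ on $\mathcal{Z}$, a loss $\ell_i:\mathcal{F}\times\mathcal{Z}\to[0,1]$, and a training set $S_i=(z_{i1},\dots,z_{im_i})$ of $m_i\ge1$ i.i.d. samples from $D_i$, the $S_i$ mutually independent. $\mathcal{M}(\mathcal{F})$ is the set of probability distributions on $\mathcal{F}$. For $Q\in\mathcal{M}(\mathcal{F})$: $\ell_i(Q,z)=\mathbb{E}_{f\sim Q}\ell_i(f,z)$, $\mathcal{R}_i(Q)=\mathbb{E}_{z\sim D_i}\ell_i(Q,z)$, $\widehat{\mathcal{R}}_i(Q)=\frac1{m_i}\sum_{j=1}^{m_i}\ell_i(Q,z_{ij})$. Hyper-prior $\mathcal{P}$ (data-independent) and hyper-posterior $\mathcal{Q}$ are distributions on $\mathcal{M}(\mathcal{F})$; posteriors $Q_i\in\mathcal{M}(\mathcal{F})$; $\mathcal{Q},Q_i$ may depend on the data. $\mathfrak{Q}=\mathcal{Q}\times Q_1\times\cdots\times Q_n$ on $\mathcal{M}(\mathcal{F})\times\mathcal{F}^n$; $\mathfrak{P}$ on the same space is generated by $P\sim\mathcal{P}$, then $f_1,\dots,f_n$ i.i.d. $\sim P$. $\mathrm{KL}$ is the Kullback–Leibler divergence. *)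

theory Defs
  imports "HOL-Probability.Probability"
begin

text \<open>It is the library's KL_divergence when Q is absolutely
  continuous w.r.t. P and the log-density is Q-integrable, and +infinity otherwise
  (the negative part of the log-density is always Q-integrable, so in the latter
  case the true KL divergence is +infinity).\<close>
definition KL_div :: "'a measure \<Rightarrow> 'a measure \<Rightarrow> ereal" where
  "KL_div Q P =
     (if sets Q = sets P \<and> absolutely_continuous P Q \<and>
         integrable Q (entropy_density (exp 1) P Q)
      then ereal (KL_divergence (exp 1) P Q) else \<infinity>)"

definition rloss :: "('f \<Rightarrow> 'z \<Rightarrow> real) \<Rightarrow> 'f measure \<Rightarrow> 'z \<Rightarrow> real" where
  "rloss l Q z = (\<integral>f. l f z \<partial>Q)"

definition risk :: "('f \<Rightarrow> 'z \<Rightarrow> real) \<Rightarrow> 'z measure \<Rightarrow> 'f measure \<Rightarrow> real" where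
  "risk l D Q = (\<integral>z. rloss l Q z \<partial>D)"

definition emp_risk :: "('f \<Rightarrow> 'z \<Rightarrow> real) \<Rightarrow> nat \<Rightarrow> (nat \<Rightarrow> 'z) \<Rightarrow> 'f measure \<Rightarrow> real" where
  "emp_risk l m s Q = (1 / real m) * (\<Sum>j<m. rloss l Q (s j))"

definition prior_joint :: "'f measure \<Rightarrow> 'f measure measure \<Rightarrow> nat \<Rightarrow> ('f measure \<times> (nat \<Rightarrow> 'f)) measure" where
  "prior_joint MF HP n =
     HP \<bind> (\<lambda>P. distr (PiM {..<n} (\<lambda>_. P))
                      (prob_algebra MF \<Otimes>\<^sub>M PiM {..<n} (\<lambda>_. MF)) (\<lambda>fs. (P, fs)))"

definition post_joint :: "'f measure measure \<Rightarrow> nat \<Rightarrow> (nat \<Rightarrow> 'f measure) \<Rightarrow> ('f measure \<times> (nat \<Rightarrow> 'f)) measure" where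
  "post_joint HQ n Q = HQ \<Otimes>\<^sub>M PiM {..<n} Q"

definition sample_measure :: "nat \<Rightarrow> (nat \<Rightarrow> nat) \<Rightarrow> (nat \<Rightarrow> 'z measure) \<Rightarrow> (nat \<Rightarrow> nat \<Rightarrow> 'z) measure" where
  "sample_measure n m D = PiM {..<n} (\<lambda>i. PiM {..<m i} (\<lambda>_. D i))"

end

theory Submission
  imports Defs
begin

text \<open>
  Write Phi(x) = -(M/lam) ln(1 - x + x exp(-lam/M)). For fixed predictors f_1, ..., f_n the
  pooled empirical risk is an average of M independent losses in [0,1]; bounding exp(-t z) by
  its chord on [0,1] and combining the tasks by the weighted AM-GM inequality gives
  E_S exp(lam (Phi(R(f)) - Rhat_S(f))) <= 1. Integrating over the hyper-prior joint and using
  Markov's inequality, outside an event of probability at most delta the exponential moment of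
  lam (Phi(R) - Rhat_S) under that joint is at most 1/delta. The Donsker-Varadhan change of
  measure then bounds the mean of lam (Phi(R) - Rhat_S) under every hyper-posterior joint by
  KL + ln(1/delta), and since Phi is convex while both risks are linear in the posteriors,
  Jensen's inequality turns this into the claimed bound.
\<close>

lemma exp_neg_mult_le_chord:
  fixes t x :: real
  assumes "0 \<le> x" "x \<le> 1"
  shows "exp (- t * x) \<le> 1 - x + x * exp (- t)"
proof -
  have "exp ((1 - x) *\<^sub>R 0 + x *\<^sub>R (- t)) \<le> (1 - x) * exp 0 + x * exp (- t)"
    by (rule convex_onD[OF exp_convex]) (use assms in auto)
  then show ?thesis by (simp add: mult.commute)
qed

lemma convex_on_compose_affine:
  fixes f :: "real \<Rightarrow> real"
  assumes f: "convex_on C f" and S: "convex S" and maps: "\<And>x. x \<in> S \<Longrightarrow> a + b * x \<in> C"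
  shows "convex_on S (\<lambda>x. f (a + b * x))"
proof (rule convex_onI[OF _ S])
  fix t x y :: real assume "0 < t" "t < 1" "x \<in> S" "y \<in> S"
  have "a + b * ((1 - t) *\<^sub>R x + t *\<^sub>R y) = (1 - t) *\<^sub>R (a + b * x) + t *\<^sub>R (a + b * y)"
    by (simp add: algebra_simps)
  then show "f (a + b * ((1 - t) *\<^sub>R x + t *\<^sub>R y)) \<le> (1 - t) * f (a + b * x) + t * f (a + b * y)"
    using convex_onD[OF f, of t "a + b * x" "a + b * y"] \<open>0 < t\<close> \<open>t < 1\<close> \<open>x \<in> S\<close> \<open>y \<in> S\<close> maps
    by simp
qed

lemma prod_power_le_weighted_mean_power:
  fixes y :: "'a \<Rightarrow> real" and w :: "'a \<Rightarrow> nat"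
  assumes I: "finite I" and y: "\<And>i. i \<in> I \<Longrightarrow> 0 < y i"
  shows "(\<Prod>i\<in>I. y i ^ w i) \<le> ((\<Sum>i\<in>I. real (w i) * y i) / real (\<Sum>i\<in>I. w i)) ^ (\<Sum>i\<in>I. w i)"
proof (cases "(\<Sum>i\<in>I. w i) = 0")
  case True
  then show ?thesis using I by simp
next
  case False
  define W where "W = real (\<Sum>i\<in>I. w i)"
  have W: "0 < W" unfolding W_def using False by (simp only: of_nat_0_less_iff)
  have "I \<noteq> {}" using False by auto
  have mean_pos: "0 < (\<Sum>i\<in>I. real (w i) * y i) / W"
  proof -
    obtain k where "k \<in> I" "w k \<noteq> 0" using False by (meson sum.neutral)
    then have "0 < (\<Sum>i\<in>I. real (w i) * y i)"
      using I y by (intro sum_pos2[of I k]) (auto simp: less_imp_le)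
    then show ?thesis using W by simp
  qed
  have "(\<Sum>i\<in>I. (real (w i) / W) * ln (y i)) \<le> ln (\<Sum>i\<in>I. (real (w i) / W) *\<^sub>R y i)"
    by (rule concave_on_sum[OF I \<open>I \<noteq> {}\<close> ln_concave])
      (use W y in \<open>auto simp: W_def simp flip: sum_divide_distrib\<close>)
  also have "(\<Sum>i\<in>I. (real (w i) / W) *\<^sub>R y i) = (\<Sum>i\<in>I. real (w i) * y i) / W"
    by (simp add: sum_divide_distrib)
  also have "(\<Sum>i\<in>I. (real (w i) / W) * ln (y i)) = (\<Sum>i\<in>I. real (w i) * ln (y i)) / W"
    by (simp add: sum_divide_distrib)
  finally have "(\<Sum>i\<in>I. real (w i) * ln (y i)) \<le> W * ln ((\<Sum>i\<in>I. real (w i) * y i) / W)"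
    using W by (simp add: pos_divide_le_eq mult.commute)
  then have "exp (\<Sum>i\<in>I. real (w i) * ln (y i)) \<le> exp (W * ln ((\<Sum>i\<in>I. real (w i) * y i) / W))"
    by simp
  moreover have "exp (\<Sum>i\<in>I. real (w i) * ln (y i)) = (\<Prod>i\<in>I. y i ^ w i)"
    using I y by (simp add: exp_sum exp_of_nat_mult)
  moreover have "exp (W * ln ((\<Sum>i\<in>I. real (w i) * y i) / W)) = ((\<Sum>i\<in>I. real (w i) * y i) / W) ^ (\<Sum>i\<in>I. w i)"
    using mean_pos unfolding W_def by (simp only: exp_of_nat_mult exp_ln)
  ultimately show ?thesis by (simp add: W_def)
qed

lemma convex_combination_unit_interval:
  fixes w v :: "'a \<Rightarrow> real"
  assumes "(\<Sum>i\<in>I. w i) = 1" "\<And>i. i \<in> I \<Longrightarrow> 0 \<le> w i" "\<And>i. i \<in> I \<Longrightarrow> 0 \<le> v i \<and> v i \<le> 1"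
  shows "0 \<le> (\<Sum>i\<in>I. w i * v i) \<and> (\<Sum>i\<in>I. w i * v i) \<le> 1"
proof
  show "0 \<le> (\<Sum>i\<in>I. w i * v i)" using assms by (intro sum_nonneg) auto
  have "(\<Sum>i\<in>I. w i * v i) \<le> (\<Sum>i\<in>I. w i)"
    using assms by (intro sum_mono) (auto intro: mult_left_le)
  then show "(\<Sum>i\<in>I. w i * v i) \<le> 1" using assms(1) by simp
qed

lemma ereal_le_plus_divide:
  fixes a b lam :: real and K :: ereal
  assumes lam: "0 < lam" and le: "ereal (lam * (a - b)) \<le> K"
  shows "ereal a \<le> ereal b + K / ereal lam"
proof (cases K)
  case (real k)
  then have "a - b \<le> k / lam" using le lam by (simp add: field_simps)
  then show ?thesis using real lam by (simp add: divide_ereal_def divide_inverse algebra_simps)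
qed (use le lam in auto)

section \<open>Catoni's function\<close>

definition catoni_phi :: "real \<Rightarrow> real \<Rightarrow> real" where
  "catoni_phi t x = - ln (1 - x + x * exp (- t)) / t"

lemma catoni_phi_div:
  "catoni_phi (a / b) x = - (b / a) * ln (1 - x + x * exp (- a / b))"
  by (simp add: catoni_phi_def)

lemma catoni_phi_arg_pos:
  fixes t x :: real
  assumes "0 < t" "x < 1 / (1 - exp (- t))"
  shows "0 < 1 - x + x * exp (- t)"
proof -
  have "x * (1 - exp (- t)) < 1" using assms by (simp add: field_simps)
  then show ?thesis by (simp add: algebra_simps)
qed

lemma le_1_in_catoni_domain:
  fixes t x :: real
  assumes "0 < t" "x \<le> 1"
  shows "x < 1 / (1 - exp (- t))"
proof -
  have "1 < 1 / (1 - exp (- t))" using assms(1) by (simp add: field_simps)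
  then show ?thesis using assms(2) by linarith
qed

lemma convex_on_catoni_phi:
  fixes t :: real
  assumes "0 < t"
  shows "convex_on {..< 1 / (1 - exp (- t))} (catoni_phi t)"
proof -
  have "convex_on {0<..} (\<lambda>y. - ln y / t)"
    using ln_concave assms by (intro convex_on_cdiv) (auto simp: concave_on_def)
  then have "convex_on {..< 1 / (1 - exp (- t))} (\<lambda>x. - ln (1 + (exp (- t) - 1) * x) / t)"
    by (rule convex_on_compose_affine)
      (use catoni_phi_arg_pos[OF assms] in \<open>auto simp: algebra_simps\<close>)
  then show ?thesis by (simp add: catoni_phi_def[abs_def] algebra_simps)
qed

lemma catoni_phi_unit_interval:
  fixes t x :: real
  assumes t: "0 < t" and x: "0 \<le> x" "x \<le> 1"
  shows "0 \<le> catoni_phi t x \<and> catoni_phi t x \<le> 1"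
proof -
  define e where "e = exp (- t)"
  have e: "0 < e" "e < 1" using t by (simp_all add: e_def)
  have "0 \<le> (1 - x) * (1 - e)" "0 \<le> x * (1 - e)" using x e by simp_all
  then have lower: "e \<le> 1 - x + x * e" and upper: "1 - x + x * e \<le> 1"
    by (simp_all add: algebra_simps)
  have "ln e \<le> ln (1 - x + x * e)" using lower e by simp
  moreover have "ln (1 - x + x * e) \<le> 0" using lower upper e by simp
  ultimately show ?thesis using t by (simp add: catoni_phi_def e_def field_simps)
qed

lemma exp_catoni_phi_mult_power:
  fixes t x :: real
  assumes "0 < t" "0 \<le> x" "x \<le> 1"
  shows "exp (t * real k * catoni_phi t x) * (1 - x + x * exp (- t)) ^ k = 1"
proof -
  have pos: "0 < 1 - x + x * exp (- t)"
    using assms by (intro catoni_phi_arg_pos le_1_in_catoni_domain) auto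
  have "t * real k * catoni_phi t x = - (real k * ln (1 - x + x * exp (- t)))"
    using assms by (simp add: catoni_phi_def)
  then show ?thesis
    using pos by (simp add: exp_minus exp_of_nat_mult field_simps)
qed

lemma (in prob_space)
  fixes X :: "'a \<Rightarrow> real"
  assumes t: "0 < t" and [measurable]: "X \<in> borel_measurable M" and X: "\<And>x. 0 \<le> X x \<and> X x \<le> 1"
  shows integrable_catoni_phi: "integrable M (\<lambda>x. catoni_phi t (X x))"
    and catoni_phi_integral_le: "catoni_phi t (\<integral>x. X x \<partial>M) \<le> (\<integral>x. catoni_phi t (X x) \<partial>M)"
proof -
  have [measurable]: "(\<lambda>x. catoni_phi t (X x)) \<in> borel_measurable M"
    unfolding catoni_phi_def by measurable
  show int_phi: "integrable M (\<lambda>x. catoni_phi t (X x))"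
    by (rule integrable_const_bound[where B=1]) (use catoni_phi_unit_interval[OF t] X in auto)
  have "integrable M X"
    by (rule integrable_const_bound[where B=1]) (use X in auto)
  then show "catoni_phi t (\<integral>x. X x \<partial>M) \<le> (\<integral>x. catoni_phi t (X x) \<partial>M)"
  proof (rule jensens_inequality[OF _ _ _ int_phi convex_on_catoni_phi[OF t], where b = "1 / (1 - exp (- t))"])
    show "AE x in M. X x \<in> {..< 1 / (1 - exp (- t))}"
      using le_1_in_catoni_domain[OF t] X by auto
  qed simp
qed

section \<open>Exponential moments of sample losses\<close>

lemma (in prob_space) integral_unit_interval:
  fixes f :: "'a \<Rightarrow> real"
  assumes f: "\<And>x. 0 \<le> f x \<and> f x \<le> 1"
  shows "0 \<le> (\<integral>x. f x \<partial>M) \<and> (\<integral>x. f x \<partial>M) \<le> 1"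
proof (cases "integrable M f")
  case True
  have "(\<integral>x. f x \<partial>M) \<le> (\<integral>x. 1 \<partial>M)"
    by (rule integral_mono[OF True]) (use f in auto)
  moreover have "0 \<le> (\<integral>x. f x \<partial>M)"
    by (rule integral_nonneg_AE) (use f in auto)
  ultimately show ?thesis by (simp add: prob_space)
qed (simp add: not_integrable_integral_eq)

lemma (in prob_space) nn_integral_exp_neg_le_chord:
  fixes h :: "'a \<Rightarrow> real"
  assumes [measurable]: "h \<in> borel_measurable M" and h: "\<And>x. 0 \<le> h x \<and> h x \<le> 1"
  shows "(\<integral>\<^sup>+x. ennreal (exp (- t * h x)) \<partial>M)
    \<le> ennreal (1 - (\<integral>x. h x \<partial>M) + (\<integral>x. h x \<partial>M) * exp (- t))"
proof -
  have int_h: "integrable M h"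
    by (rule integrable_const_bound[where B=1]) (use h in auto)
  have "- t * h x \<le> \<bar>t\<bar>" for x
    using h[of x] by (cases "t \<ge> 0") (auto intro: order.trans[of _ 0] mult_left_le)
  then have int_exp: "integrable M (\<lambda>x. exp (- t * h x))"
    by (intro integrable_const_bound[where B="exp \<bar>t\<bar>"]) auto
  have "(\<integral>\<^sup>+x. ennreal (exp (- t * h x)) \<partial>M) = ennreal (\<integral>x. exp (- t * h x) \<partial>M)"
    by (rule nn_integral_eq_integral[OF int_exp]) simp
  also have "(\<integral>x. exp (- t * h x) \<partial>M) \<le> (\<integral>x. 1 - h x + h x * exp (- t) \<partial>M)"
    by (rule integral_mono[OF int_exp]) (use int_h h exp_neg_mult_le_chord in auto)
  also have "\<dots> = 1 - (\<integral>x. h x \<partial>M) + (\<integral>x. h x \<partial>M) * exp (- t)"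
    using int_h by (simp add: prob_space)
  finally show ?thesis by (simp add: ennreal_leI)
qed

lemma nn_integral_PiM_prod:
  fixes f :: "'i \<Rightarrow> 'a \<Rightarrow> ennreal"
  assumes I: "finite I" and M: "\<And>i. i \<in> I \<Longrightarrow> prob_space (M i)"
    and f: "\<And>i. i \<in> I \<Longrightarrow> f i \<in> borel_measurable (M i)"
  shows "(\<integral>\<^sup>+x. (\<Prod>i\<in>I. f i (x i)) \<partial>PiM I M) = (\<Prod>i\<in>I. \<integral>\<^sup>+y. f i y \<partial>M i)"
proof -
  \<comment> \<open>product_sigma_finite wants a sigma-finite measure at every index, so pad M outside I.\<close>
  define M' where "M' i = (if i \<in> I then M i else return (count_space UNIV) undefined)" for i
  interpret product_sigma_finite M'
    unfolding product_sigma_finite_def M'_def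
    using M prob_space_return[of undefined "count_space UNIV"]
    by (auto intro: prob_space_imp_sigma_finite)
  have "PiM I M = PiM I M'" by (intro PiM_cong) (auto simp: M'_def)
  moreover have "(\<integral>\<^sup>+x. (\<Prod>i\<in>I. f i (x i)) \<partial>PiM I M') = (\<Prod>i\<in>I. integral\<^sup>N (M' i) (f i))"
    by (rule product_nn_integral_prod[OF I]) (use f in \<open>simp add: M'_def\<close>)
  ultimately show ?thesis by (simp add: M'_def)
qed

lemma nn_integral_sample_measure_exp_le:
  fixes h :: "nat \<Rightarrow> 'z \<Rightarrow> real"
  assumes D: "\<And>i. i < n \<Longrightarrow> prob_space (D i)"
    and h: "\<And>i. i < n \<Longrightarrow> h i \<in> borel_measurable (D i)"
    and h_range: "\<And>i z. i < n \<Longrightarrow> 0 \<le> h i z \<and> h i z \<le> 1"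
  shows "(\<integral>\<^sup>+S. ennreal (exp (- t * (\<Sum>i<n. \<Sum>j<m i. h i (S i j)))) \<partial>sample_measure n m D)
    \<le> ennreal (\<Prod>i<n. (1 - (\<integral>z. h i z \<partial>D i) + (\<integral>z. h i z \<partial>D i) * exp (- t)) ^ m i)"
proof -
  define c where "c i = 1 - (\<integral>z. h i z \<partial>D i) + (\<integral>z. h i z \<partial>D i) * exp (- t)" for i
  have c_nonneg: "0 \<le> c i" if "i < n" for i
    using prob_space.integral_unit_interval[OF D[OF that], of "h i"] h_range[OF that]
    by (simp add: c_def add_nonneg_nonneg)
  have exp_as_prod: "ennreal (exp (- t * (\<Sum>i<n. \<Sum>j<m i. h i (S i j))))
      = (\<Prod>i<n. \<Prod>j<m i. ennreal (exp (- t * h i (S i j))))" for S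
    by (simp add: sum_distrib_left exp_sum prod_ennreal prod_nonneg)
  have "(\<integral>\<^sup>+S. ennreal (exp (- t * (\<Sum>i<n. \<Sum>j<m i. h i (S i j)))) \<partial>sample_measure n m D)
      = (\<Prod>i<n. \<integral>\<^sup>+s. (\<Prod>j<m i. ennreal (exp (- t * h i (s j)))) \<partial>PiM {..<m i} (\<lambda>_. D i))"
    unfolding exp_as_prod sample_measure_def
    by (rule nn_integral_PiM_prod) (use D h in \<open>auto intro: prob_space_PiM\<close>)
  also have "\<dots> = (\<Prod>i<n. \<Prod>j<m i. \<integral>\<^sup>+z. ennreal (exp (- t * h i z)) \<partial>D i)"
    by (intro prod.cong refl nn_integral_PiM_prod) (use D h in auto)
  also have "\<dots> \<le> (\<Prod>i<n. \<Prod>j<m i. ennreal (c i))"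
    unfolding c_def
    by (intro prod_mono_ennreal prob_space.nn_integral_exp_neg_le_chord) (use D h h_range in auto)
  also have "\<dots> = ennreal (\<Prod>i<n. c i ^ m i)"
    using c_nonneg by (simp add: ennreal_power, intro prod_ennreal) simp
  finally show ?thesis by (simp add: c_def)
qed

section \<open>Change of measure\<close>

lemma KL_divergence_real_density:
  fixes N Q :: "'a measure"
  assumes N: "finite_measure N" and Q: "prob_space Q" and sets_eq: "sets Q = sets N"
    and ac: "absolutely_continuous N Q"
    and int_entropy: "integrable Q (entropy_density (exp 1) N Q)"
  obtains D where "D \<in> borel_measurable N" "\<And>x. 0 \<le> D x" "AE x in Q. 0 < D x"
    "Q = density N D" "integrable Q (\<lambda>x. ln (D x))"
    "KL_divergence (exp 1) N Q = (\<integral>x. ln (D x) \<partial>Q)"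
proof -
  interpret N: finite_measure N by fact
  interpret Q: prob_space Q by fact
  obtain D where D_meas[measurable]: "D \<in> borel_measurable N"
    and D_RN: "AE x in N. RN_deriv N Q x = ennreal (D x)"
    and D_pos: "AE x in Q. 0 < D x" and D_nonneg: "\<And>x. 0 \<le> D x"
    using N.real_RN_deriv[OF Q.finite_measure_axioms ac sets_eq] by metis
  have "Q = density N (RN_deriv N Q)"
    using ac sets_eq by (rule N.density_RN_deriv[symmetric])
  also have "\<dots> = density N D"
    using D_RN by (auto intro!: density_cong)
  finally have Q_density: "Q = density N D" .
  have [measurable]: "D \<in> borel_measurable Q"
    by (simp add: measurable_cong_sets[OF sets_eq refl])
  have entropy_ln: "AE x in Q. entropy_density (exp 1) N Q x = ln (D x)"
    using absolutely_continuous_AE[OF sets_eq ac D_RN]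
    by eventually_elim (simp add: entropy_density_def log_ln D_nonneg)
  have "integrable Q (\<lambda>x. ln (D x))"
    by (rule integrable_cong_AE_imp[OF int_entropy _ entropy_ln]) measurable
  moreover have "KL_divergence (exp 1) N Q = (\<integral>x. ln (D x) \<partial>Q)"
    unfolding KL_divergence_def using entropy_ln borel_measurable_integrable[OF int_entropy]
    by (intro integral_cong_AE) auto
  ultimately show thesis
    using that D_meas D_nonneg D_pos Q_density by blast
qed

lemma nn_integral_exp_div_density_le_1:
  fixes D G :: "'a \<Rightarrow> real"
  assumes [measurable]: "D \<in> borel_measurable N" and D_nonneg: "\<And>x. 0 \<le> D x"
    and [measurable]: "G \<in> borel_measurable N"
    and c: "0 < c" "(\<integral>\<^sup>+x. exp (G x) \<partial>N) \<le> ennreal c"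
  shows "(\<integral>\<^sup>+x. exp (G x) / (D x * c) \<partial>density N D) \<le> 1"
proof -
  have "(\<integral>\<^sup>+x. exp (G x) / (D x * c) \<partial>density N D)
      = (\<integral>\<^sup>+x. ennreal (D x) * ennreal (exp (G x) / (D x * c)) \<partial>N)"
    by (rule nn_integral_density) measurable
  also have "\<dots> \<le> (\<integral>\<^sup>+x. ennreal (exp (G x)) * ennreal (1 / c) \<partial>N)"
  proof (rule nn_integral_mono)
    fix x
    have "D x * (exp (G x) / (D x * c)) \<le> exp (G x) * (1 / c)"
      using D_nonneg[of x] c(1) by (cases "D x = 0") simp_all
    then show "ennreal (D x) * ennreal (exp (G x) / (D x * c)) \<le> ennreal (exp (G x)) * ennreal (1 / c)"
      using D_nonneg[of x] c(1) by (simp add: ennreal_leI flip: ennreal_mult)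
  qed
  also have "\<dots> = (\<integral>\<^sup>+x. exp (G x) \<partial>N) * ennreal (1 / c)"
    by (rule nn_integral_multc) measurable
  also have "\<dots> \<le> ennreal c * ennreal (1 / c)"
    using c(2) by (rule mult_right_mono) simp
  also have "\<dots> = 1" using c(1) by (simp flip: ennreal_mult)
  finally show ?thesis .
qed

lemma integral_le_KL_divergence_plus_ln:
  fixes N Q :: "'a measure" and G :: "'a \<Rightarrow> real"
  assumes N: "finite_measure N" and Q: "prob_space Q" and sets_eq: "sets Q = sets N"
    and ac: "absolutely_continuous N Q"
    and int_entropy: "integrable Q (entropy_density (exp 1) N Q)"
    and G_meas[measurable]: "G \<in> borel_measurable N" and G_bounded: "\<And>x. \<bar>G x\<bar> \<le> B"
    and c: "0 < c" "(\<integral>\<^sup>+x. exp (G x) \<partial>N) \<le> ennreal c"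
  shows "(\<integral>x. G x \<partial>Q) \<le> KL_divergence (exp 1) N Q + ln c"
proof -
  interpret Q: prob_space Q by fact
  obtain D where D_meas[measurable]: "D \<in> borel_measurable N" and D_nonneg: "\<And>x. 0 \<le> D x"
    and D_pos: "AE x in Q. 0 < D x" and Q_density: "Q = density N D"
    and int_ln: "integrable Q (\<lambda>x. ln (D x))" and KL: "KL_divergence (exp 1) N Q = (\<integral>x. ln (D x) \<partial>Q)"
    using KL_divergence_real_density[OF N Q sets_eq ac int_entropy] by metis
  have [measurable]: "G \<in> borel_measurable Q" "D \<in> borel_measurable Q"
    by (simp_all add: measurable_cong_sets[OF sets_eq refl])
  have int_G: "integrable Q G"
    by (rule Q.integrable_const_bound[where B=B]) (use G_bounded in auto)
  define y where "y x = exp (G x) / (D x * c)" for x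
  have y_nonneg: "0 \<le> y x" for x using c(1) by (simp add: y_def D_nonneg)
  have [measurable]: "y \<in> borel_measurable Q" unfolding y_def by measurable
  have nn_y: "(\<integral>\<^sup>+x. y x \<partial>Q) \<le> 1"
    unfolding y_def Q_density using D_meas D_nonneg G_meas c by (rule nn_integral_exp_div_density_le_1)
  have int_y: "integrable Q y"
    by (rule integrableI_nonneg) (use nn_y y_nonneg in \<open>auto intro: le_less_trans\<close>)
  have int_y_le: "(\<integral>x. y x \<partial>Q) \<le> 1"
    using nn_y y_nonneg by (subst integral_eq_nn_integral) (auto intro: enn2real_leI)
  have "AE x in Q. G x - ln (D x) \<le> ln c + (y x - 1)"
    using D_pos
  proof eventually_elim
    case (elim x)
    then have "0 < y x" using c(1) by (simp add: y_def)
    moreover have "ln (y x) = G x - ln (D x) - ln c"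
      using elim c(1) by (simp add: y_def ln_div ln_mult)
    ultimately show ?case using ln_le_minus_one[of "y x"] by simp
  qed
  then have "(\<integral>x. G x - ln (D x) \<partial>Q) \<le> (\<integral>x. ln c + (y x - 1) \<partial>Q)"
    by (intro integral_mono_AE) (use int_G int_ln int_y in auto)
  also have "\<dots> = ln c + ((\<integral>x. y x \<partial>Q) - 1)"
    using int_y by (simp add: Q.prob_space)
  finally show ?thesis
    using int_y_le int_G int_ln by (simp add: KL)
qed

lemma (in prob_space) prob_nn_integral_le_inverse:
  assumes Z[measurable]: "Z \<in> borel_measurable M" and Z_int: "(\<integral>\<^sup>+x. Z x \<partial>M) \<le> 1"
    and delta: "0 < delta"
  shows "1 - delta \<le> prob {x \<in> space M. Z x \<le> ennreal (1 / delta)}"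
proof -
  let ?A = "{x \<in> space M. Z x \<le> ennreal (1 / delta)}"
  have "space M - ?A \<subseteq> {x \<in> space M. 1 \<le> ennreal delta * Z x}"
  proof safe
    fix x assume "x \<in> space M" "\<not> Z x \<le> ennreal (1 / delta)"
    then have "ennreal delta * ennreal (1 / delta) \<le> ennreal delta * Z x"
      by (intro mult_left_mono) auto
    then show "1 \<le> ennreal delta * Z x" using delta by (simp flip: ennreal_mult)
  qed
  then have "emeasure M (space M - ?A) \<le> emeasure M {x \<in> space M. 1 \<le> ennreal delta * Z x}"
    by (intro emeasure_mono) auto
  also have "\<dots> \<le> ennreal delta * (\<integral>\<^sup>+x. Z x * indicator (space M) x \<partial>M)"
    by (rule nn_integral_Markov_inequality) auto
  also have "(\<integral>\<^sup>+x. Z x * indicator (space M) x \<partial>M) = (\<integral>\<^sup>+x. Z x \<partial>M)"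
    by (rule nn_integral_cong) simp
  also have "ennreal delta * (\<integral>\<^sup>+x. Z x \<partial>M) \<le> ennreal delta"
    using mult_left_mono[OF Z_int, of "ennreal delta"] by simp
  finally have "prob (space M - ?A) \<le> delta"
    using delta by (simp add: emeasure_eq_measure)
  then show ?thesis by (simp add: prob_compl)
qed

lemma pac_bayes_from_exponential_moment:
  fixes SM :: "'s measure" and N :: "'w measure" and g :: "'s \<Rightarrow> 'w \<Rightarrow> real"
  assumes SM: "prob_space SM" and N_le_1: "emeasure N (space N) \<le> 1"
    and g_meas: "(\<lambda>(S, \<omega>). g S \<omega>) \<in> borel_measurable (SM \<Otimes>\<^sub>M N)"
    and g_bounded: "\<And>S \<omega>. \<bar>g S \<omega>\<bar> \<le> B"
    and moment: "\<And>\<omega>. \<omega> \<in> space N \<Longrightarrow> (\<integral>\<^sup>+S. exp (g S \<omega>) \<partial>SM) \<le> 1"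
    and delta: "0 < delta"
  shows "\<exists>A \<in> sets SM. 1 - delta \<le> measure SM A \<and>
    (\<forall>S \<in> A. \<forall>Q. prob_space Q \<and> sets Q = sets N \<longrightarrow>
       ereal (\<integral>\<omega>. g S \<omega> \<partial>Q) \<le> KL_div Q N + ereal (ln (1 / delta)))"
proof -
  interpret SM: prob_space SM by fact
  interpret N: finite_measure N
    using N_le_1 by (intro finite_measureI) (auto simp: top_unique)
  interpret pair_sigma_finite SM N ..
  define Z where "Z S = (\<integral>\<^sup>+\<omega>. exp (g S \<omega>) \<partial>N)" for S
  have g_meas': "(\<lambda>(S, \<omega>). ennreal (exp (g S \<omega>))) \<in> borel_measurable (SM \<Otimes>\<^sub>M N)"
    using g_meas by (simp add: case_prod_beta')
  have Z_meas[measurable]: "Z \<in> borel_measurable SM"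
    unfolding Z_def using N.borel_measurable_nn_integral[OF g_meas'] by simp
  have "(\<integral>\<^sup>+S. Z S \<partial>SM) = (\<integral>\<^sup>+\<omega>. (\<integral>\<^sup>+S. exp (g S \<omega>) \<partial>SM) \<partial>N)"
    unfolding Z_def using Fubini'[OF g_meas'] by simp
  also have "\<dots> \<le> (\<integral>\<^sup>+\<omega>. 1 \<partial>N)"
    by (intro nn_integral_mono moment)
  also have "\<dots> \<le> 1" using N_le_1 by simp
  finally have "(\<integral>\<^sup>+S. Z S \<partial>SM) \<le> 1" .
  define A where "A = {S \<in> space SM. Z S \<le> ennreal (1 / delta)}"
  have "A \<in> sets SM" unfolding A_def by measurable
  moreover have "1 - delta \<le> measure SM A"
    unfolding A_def by (rule SM.prob_nn_integral_le_inverse) fact+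
  moreover have "ereal (\<integral>\<omega>. g S \<omega> \<partial>Q) \<le> KL_div Q N + ereal (ln (1 / delta))"
    if S: "S \<in> A" and Q: "prob_space Q" "sets Q = sets N" for S Q
  proof (cases "absolutely_continuous N Q \<and> integrable Q (entropy_density (exp 1) N Q)")
    case True
    have "(\<lambda>\<omega>. g S \<omega>) \<in> borel_measurable N"
      using measurable_Pair2[OF g_meas, of S] S by (simp add: A_def)
    then have "(\<integral>\<omega>. g S \<omega> \<partial>Q) \<le> KL_divergence (exp 1) N Q + ln (1 / delta)"
      using True S delta
      by (intro integral_le_KL_divergence_plus_ln[OF N.finite_measure_axioms Q, where B=B])
        (auto simp: A_def Z_def g_bounded)
    then show ?thesis using True Q by (simp add: KL_div_def)
  qed (use Q in \<open>auto simp: KL_div_def\<close>)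
  ultimately show ?thesis by blast
qed

lemma emeasure_bind_space_le_1:
  assumes "space M \<noteq> {}" "emeasure M (space M) \<le> 1"
    and sets_f: "\<And>x. x \<in> space M \<Longrightarrow> sets (f x) = sets N"
  shows "emeasure (M \<bind> f) (space (M \<bind> f)) \<le> 1"
proof -
  \<comment> \<open>No measurability of f is needed: bind is a join over the subprobability algebra,
    and the image of M there has mass at most that of M.\<close>
  let ?SA = "subprob_algebra N"
  have SA: "subprob_algebra (f (SOME x. x \<in> space M)) = ?SA"
    using sets_f assms(1) by (intro subprob_algebra_cong) (simp add: some_in_eq)
  have "emeasure (M \<bind> f) (space N) = emeasure (join (distr M ?SA f)) (space N)"
    using assms(1) by (simp add: bind_nonempty SA)
  also have "\<dots> = (\<integral>\<^sup>+M'. emeasure M' (space N) \<partial>distr M ?SA f)"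
    by (rule emeasure_join[OF _ sets.top]) simp
  also have "\<dots> \<le> (\<integral>\<^sup>+M'. 1 \<partial>distr M ?SA f)"
    by (intro nn_integral_mono)
      (auto simp: space_subprob_algebra dest: subprob_space.subprob_emeasure_le_1 sets_eq_imp_space_eq)
  also have "\<dots> = emeasure (distr M ?SA f) (space ?SA)" by simp
  also have "\<dots> \<le> emeasure M (space M)"
    unfolding distr_def emeasure_measure_of_conv by (auto intro!: emeasure_mono)
  finally show ?thesis
    using assms by (simp add: space_bind)
qed

lemma
  fixes MF :: "'f measure" and HP :: "'f measure measure"
  assumes "prob_space HP"
  shows sets_prior_joint: "sets (prior_joint MF HP n) = sets (prob_algebra MF \<Otimes>\<^sub>M PiM {..<n} (\<lambda>_. MF))"
    and emeasure_prior_joint_le_1: "emeasure (prior_joint MF HP n) (space (prior_joint MF HP n)) \<le> 1"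
proof -
  interpret prob_space HP by fact
  show "sets (prior_joint MF HP n) = sets (prob_algebra MF \<Otimes>\<^sub>M PiM {..<n} (\<lambda>_. MF))"
    unfolding prior_joint_def by (rule sets_bind) (simp_all add: not_empty)
  show "emeasure (prior_joint MF HP n) (space (prior_joint MF HP n)) \<le> 1"
    unfolding prior_joint_def
    by (rule emeasure_bind_space_le_1[where N="prob_algebra MF \<Otimes>\<^sub>M PiM {..<n} (\<lambda>_. MF)"])
      (simp_all add: not_empty emeasure_space_1)
qed

lemma prob_space_post_joint:
  assumes "prob_space HQ" "\<And>i. i < n \<Longrightarrow> prob_space (Q i)"
  shows "prob_space (post_joint HQ n Q)"
  unfolding post_joint_def using assms by (intro prob_space_pair prob_space_PiM) auto

lemma sets_post_joint:
  assumes "sets HQ = sets X" "\<And>i. i < n \<Longrightarrow> sets (Q i) = sets MF"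
  shows "sets (post_joint HQ n Q) = sets (X \<Otimes>\<^sub>M PiM {..<n} (\<lambda>_. MF))"
  unfolding post_joint_def using assms by (intro sets_pair_measure_cong sets_PiM_cong) auto

lemma measurable_snd_post_joint:
  assumes "\<And>i. i < n \<Longrightarrow> sets (Q i) = sets MF"
  shows "snd \<in> measurable (post_joint HQ n Q) (PiM {..<n} (\<lambda>_. MF))"
proof -
  have "sets (PiM {..<n} Q) = sets (PiM {..<n} (\<lambda>_. MF))"
    using assms by (intro sets_PiM_cong) auto
  then show ?thesis
    unfolding post_joint_def using measurable_snd by (simp cong: measurable_cong_sets)
qed

lemma
  fixes h :: "'f \<Rightarrow> real"
  assumes HQ: "prob_space HQ" and Q: "\<And>i. i < n \<Longrightarrow> prob_space (Q i)" and i: "i < n"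
    and h[measurable]: "h \<in> borel_measurable (Q i)" and h_bounded: "\<And>x. \<bar>h x\<bar> \<le> B"
  shows integrable_post_joint_component: "integrable (post_joint HQ n Q) (\<lambda>\<omega>. h (snd \<omega> i))"
    and integral_post_joint_component: "(\<integral>\<omega>. h (snd \<omega> i) \<partial>post_joint HQ n Q) = (\<integral>x. h x \<partial>Q i)"
proof -
  have PQ: "prob_space (PiM {..<n} Q)" by (rule prob_space_PiM) (use Q in auto)
  interpret pair_prob_space HQ "PiM {..<n} Q"
    using HQ PQ by (simp add: pair_prob_space_def pair_sigma_finite_def prob_space_imp_sigma_finite)
  have [measurable]: "(\<lambda>y. y i) \<in> measurable (PiM {..<n} Q) (Q i)"
    by (rule measurable_component_singleton) (use i in simp)
  have int: "integrable (HQ \<Otimes>\<^sub>M PiM {..<n} Q) (\<lambda>(x, y). h (y i))"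
    by (rule P.integrable_const_bound[where B=B]) (auto simp: split_beta h_bounded)
  then show "integrable (post_joint HQ n Q) (\<lambda>\<omega>. h (snd \<omega> i))"
    by (simp add: post_joint_def split_beta')
  have "(\<integral>\<omega>. h (snd \<omega> i) \<partial>post_joint HQ n Q) = (\<integral>y. (\<integral>x. h (y i) \<partial>HQ) \<partial>PiM {..<n} Q)"
    using integral_snd[OF int] by (simp add: post_joint_def split_beta')
  also have "\<dots> = (\<integral>y. h (y i) \<partial>PiM {..<n} Q)"
    using M1.prob_space by simp
  also have "\<dots> = (\<integral>x. h x \<partial>distr (PiM {..<n} Q) (Q i) (\<lambda>y. y i))"
    by (rule integral_distr[symmetric]) measurable
  also have "distr (PiM {..<n} Q) (Q i) (\<lambda>y. y i) = Q i"
    by (rule distr_PiM_component) (use Q i in auto)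
  finally show "(\<integral>\<omega>. h (snd \<omega> i) \<partial>post_joint HQ n Q) = (\<integral>x. h x \<partial>Q i)" .
qed

lemma risk_eq_integral_expected_loss:
  fixes l :: "'f \<Rightarrow> 'z \<Rightarrow> real"
  assumes Q: "prob_space Q" and D: "prob_space D"
    and l: "(\<lambda>(f, z). l f z) \<in> borel_measurable (Q \<Otimes>\<^sub>M D)" and l_bounded: "\<And>f z. \<bar>l f z\<bar> \<le> B"
  shows "risk l D Q = (\<integral>f. (\<integral>z. l f z \<partial>D) \<partial>Q)"
proof -
  interpret pair_prob_space Q D
    using Q D by (simp add: pair_prob_space_def pair_sigma_finite_def prob_space_imp_sigma_finite)
  have "integrable (Q \<Otimes>\<^sub>M D) (\<lambda>(f, z). l f z)"
    by (rule P.integrable_const_bound[where B=B]) (use l l_bounded in \<open>auto simp: split_beta\<close>)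
  then show ?thesis
    unfolding risk_def rloss_def by (rule Fubini_integral)
qed

locale multitask_learning =
  fixes MF :: "'f measure" and MZ :: "'z measure"
    and n :: nat and m :: "nat \<Rightarrow> nat"
    and D :: "nat \<Rightarrow> 'z measure" and l :: "nat \<Rightarrow> 'f \<Rightarrow> 'z \<Rightarrow> real"
  assumes n_pos: "n \<ge> 1"
    and m_pos: "\<And>i. i < n \<Longrightarrow> m i \<ge> 1"
    and D_prob: "\<And>i. i < n \<Longrightarrow> prob_space (D i)"
    and D_sets: "\<And>i. i < n \<Longrightarrow> sets (D i) = sets MZ"
    and l_meas: "\<And>i. i < n \<Longrightarrow> (\<lambda>(f, z). l i f z) \<in> borel_measurable (MF \<Otimes>\<^sub>M MZ)"
    and l_range: "\<And>i f z. i < n \<Longrightarrow> 0 \<le> l i f z \<and> l i f z \<le> 1"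
begin

abbreviation M :: real where
  "M \<equiv> real (\<Sum>i<n. m i)"

text \<open>For deterministic predictors fs, pooled_risk fs and pooled_emp_risk S fs are the
  weighted risks R^S and Rhat^S of the statement with every Q_i a point mass at fs i.\<close>

definition pooled_risk :: "(nat \<Rightarrow> 'f) \<Rightarrow> real" where
  "pooled_risk fs = (\<Sum>i<n. real (m i) / M * (\<integral>z. l i (fs i) z \<partial>D i))"

definition pooled_emp_risk :: "(nat \<Rightarrow> nat \<Rightarrow> 'z) \<Rightarrow> (nat \<Rightarrow> 'f) \<Rightarrow> real" where
  "pooled_emp_risk S fs = (\<Sum>i<n. real (m i) / M * (1 / real (m i) * (\<Sum>j<m i. l i (fs i) (S i j))))"

definition catoni_gap :: "real \<Rightarrow> (nat \<Rightarrow> nat \<Rightarrow> 'z) \<Rightarrow> (nat \<Rightarrow> 'f) \<Rightarrow> real" where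
  "catoni_gap lam S fs = lam * (catoni_phi (lam / M) (pooled_risk fs) - pooled_emp_risk S fs)"

lemma M_pos: "0 < M"
proof -
  have "m 0 \<le> (\<Sum>i<n. m i)" by (rule member_le_sum) (use n_pos in auto)
  then show ?thesis using m_pos[of 0] n_pos by linarith
qed

lemma sum_weights: "(\<Sum>i<n. real (m i) / M) = 1"
  using M_pos by (simp flip: sum_divide_distrib)

lemma expected_loss_unit_interval:
  "i < n \<Longrightarrow> 0 \<le> (\<integral>z. l i f z \<partial>D i) \<and> (\<integral>z. l i f z \<partial>D i) \<le> 1"
  using prob_space.integral_unit_interval[OF D_prob] l_range by blast

lemma pooled_risk_unit_interval: "0 \<le> pooled_risk fs \<and> pooled_risk fs \<le> 1"
  unfolding pooled_risk_def
  by (rule convex_combination_unit_interval[OF sum_weights]) (use M_pos expected_loss_unit_interval in auto)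

lemma pooled_emp_risk_unit_interval: "0 \<le> pooled_emp_risk S fs \<and> pooled_emp_risk S fs \<le> 1"
  unfolding pooled_emp_risk_def
proof (rule convex_combination_unit_interval[OF sum_weights])
  fix i assume "i \<in> {..<n}"
  then have "0 \<le> (\<Sum>j<m i. l i (fs i) (S i j))" "(\<Sum>j<m i. l i (fs i) (S i j)) \<le> real (m i)"
    using sum_mono[of "{..<m i}" "\<lambda>j. l i (fs i) (S i j)" "\<lambda>_. 1"] l_range
    by (auto intro: sum_nonneg)
  moreover have "0 < real (m i)" using m_pos \<open>i \<in> {..<n}\<close> by (simp add: Suc_le_eq)
  ultimately show "0 \<le> 1 / real (m i) * (\<Sum>j<m i. l i (fs i) (S i j)) \<and>
      1 / real (m i) * (\<Sum>j<m i. l i (fs i) (S i j)) \<le> 1"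
    by (simp add: field_simps)
qed (use M_pos in auto)

lemma loss_measurable_D:
  "i < n \<Longrightarrow> (\<lambda>(f, z). l i f z) \<in> borel_measurable (MF \<Otimes>\<^sub>M D i)"
  using l_meas by (simp cong: measurable_cong_sets add: sets_pair_measure_cong[OF refl D_sets])

lemma expected_loss_measurable:
  assumes "i < n"
  shows "(\<lambda>f. \<integral>z. l i f z \<partial>D i) \<in> borel_measurable MF"
proof -
  interpret prob_space "D i" using D_prob assms .
  show ?thesis
    by (rule borel_measurable_lebesgue_integral) (use loss_measurable_D[OF assms] in simp)
qed

lemma loss_section_measurable:
  "i < n \<Longrightarrow> f \<in> space MF \<Longrightarrow> l i f \<in> borel_measurable MZ"
  using measurable_Pair2[OF l_meas] by simp

lemma sample_component_measurable:
  assumes "i < n" "j < m i"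
  shows "(\<lambda>S. S i j) \<in> measurable (sample_measure n m D) MZ"
proof -
  have "(\<lambda>S. S i) \<in> measurable (sample_measure n m D) (PiM {..<m i} (\<lambda>_. D i))"
    unfolding sample_measure_def by (rule measurable_component_singleton) (use assms in simp)
  from measurable_compose[OF this measurable_component_singleton[of j "{..<m i}"]]
  show ?thesis using assms by (simp cong: measurable_cong_sets add: D_sets)
qed

lemma prob_space_sample_measure: "prob_space (sample_measure n m D)"
  unfolding sample_measure_def using D_prob by (intro prob_space_PiM) auto

lemma pooled_risk_measurable[measurable]:
  "pooled_risk \<in> borel_measurable (PiM {..<n} (\<lambda>_. MF))"
proof -
  have "(\<lambda>fs. \<integral>z. l i (fs i) z \<partial>D i) \<in> borel_measurable (PiM {..<n} (\<lambda>_. MF))" if "i < n" for i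
    using measurable_compose[OF measurable_component_singleton[of i "{..<n}" "\<lambda>_. MF"]
        expected_loss_measurable[OF that]] that
    by simp
  then show ?thesis
    unfolding pooled_risk_def by (intro borel_measurable_sum borel_measurable_times) auto
qed

lemma pooled_emp_risk_measurable:
  "(\<lambda>(S, fs). pooled_emp_risk S fs)
    \<in> borel_measurable (sample_measure n m D \<Otimes>\<^sub>M PiM {..<n} (\<lambda>_. MF))"
proof -
  have "(\<lambda>p. l i (snd p i) (fst p i j))
      \<in> borel_measurable (sample_measure n m D \<Otimes>\<^sub>M PiM {..<n} (\<lambda>_. MF))"
    if "i < n" "j < m i" for i j
  proof -
    have "(\<lambda>p. snd p i) \<in> measurable (sample_measure n m D \<Otimes>\<^sub>M PiM {..<n} (\<lambda>_. MF)) MF"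
      using measurable_compose[OF measurable_snd measurable_component_singleton] that by simp
    moreover have "(\<lambda>p. fst p i j) \<in> measurable (sample_measure n m D \<Otimes>\<^sub>M PiM {..<n} (\<lambda>_. MF)) MZ"
      using measurable_compose[OF measurable_fst sample_component_measurable[OF that]] .
    ultimately show ?thesis
      using measurable_compose[OF measurable_Pair l_meas[OF \<open>i < n\<close>]] by simp
  qed
  then show ?thesis
    unfolding pooled_emp_risk_def case_prod_beta
    by (intro borel_measurable_sum borel_measurable_times borel_measurable_const) auto
qed

lemma mean_of_chords:
  "(\<Sum>i<n. real (m i) * (1 - r i + r i * e)) / M
    = 1 - (\<Sum>i<n. real (m i) / M * r i) + (\<Sum>i<n. real (m i) / M * r i) * e"
proof -
  have "(\<Sum>i<n. real (m i) * (1 - r i + r i * e)) / M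
      = (\<Sum>i<n. real (m i) / M - real (m i) / M * r i + real (m i) / M * r i * e)"
    by (simp add: sum_divide_distrib add_divide_distrib diff_divide_distrib ring_distribs mult.assoc)
  also have "\<dots> = (\<Sum>i<n. real (m i) / M) - (\<Sum>i<n. real (m i) / M * r i)
      + (\<Sum>i<n. real (m i) / M * r i) * e"
    by (simp add: sum.distrib sum_subtractf sum_distrib_right)
  finally show ?thesis by (simp only: sum_weights)
qed

lemma exp_catoni_mult_prod_chords_le_1:
  assumes t: "0 < t" and r: "\<And>i. i < n \<Longrightarrow> 0 \<le> r i \<and> r i \<le> 1"
  shows "exp (t * M * catoni_phi t (\<Sum>i<n. real (m i) / M * r i))
    * (\<Prod>i<n. (1 - r i + r i * exp (- t)) ^ m i) \<le> 1"
proof -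
  define R where "R = (\<Sum>i<n. real (m i) / M * r i)"
  have R: "0 \<le> R" "R \<le> 1"
    using convex_combination_unit_interval[OF sum_weights _ r] M_pos by (auto simp: R_def)
  have "0 < 1 - r i + r i * exp (- t)" if "i < n" for i
    using r[OF that] by (intro catoni_phi_arg_pos[OF t] le_1_in_catoni_domain[OF t]) auto
  then have "(\<Prod>i<n. (1 - r i + r i * exp (- t)) ^ m i) \<le> (1 - R + R * exp (- t)) ^ (\<Sum>i<n. m i)"
    using prod_power_le_weighted_mean_power[of "{..<n}" "\<lambda>i. 1 - r i + r i * exp (- t)" m]
      mean_of_chords[of r "exp (- t)"]
    by (simp add: R_def)
  then have "exp (t * M * catoni_phi t R) * (\<Prod>i<n. (1 - r i + r i * exp (- t)) ^ m i)
      \<le> exp (t * M * catoni_phi t R) * (1 - R + R * exp (- t)) ^ (\<Sum>i<n. m i)"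
    by simp
  also have "\<dots> = 1" by (rule exp_catoni_phi_mult_power[OF t R])
  finally show ?thesis by (simp add: R_def)
qed

lemma nn_integral_exp_catoni_gap_le_1:
  assumes lam: "0 < lam" and fs: "fs \<in> space (PiM {..<n} (\<lambda>_. MF))"
  shows "(\<integral>\<^sup>+S. exp (catoni_gap lam S fs) \<partial>sample_measure n m D) \<le> 1"
proof -
  define t where "t = lam / M"
  have t: "0 < t" using lam M_pos by (simp add: t_def)
  define r where "r i = (\<integral>z. l i (fs i) z \<partial>D i)" for i
  define L where "L S = (\<Sum>i<n. \<Sum>j<m i. l i (fs i) (S i j))" for S
  have fs_i: "fs i \<in> space MF" if "i < n" for i using fs that by (auto simp: space_PiM)
  have [measurable]: "L \<in> borel_measurable (sample_measure n m D)"
    unfolding L_def using measurable_compose[OF sample_component_measurable loss_section_measurable[OF _ fs_i]]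
    by (intro borel_measurable_sum) auto
  have emp: "lam * pooled_emp_risk S fs = t * L S" for S
    unfolding pooled_emp_risk_def t_def L_def using m_pos
    by (auto simp: sum_distrib_left Suc_le_eq intro!: sum.cong)
  have "exp (catoni_gap lam S fs) = exp (lam * catoni_phi t (pooled_risk fs)) * exp (- t * L S)" for S
    unfolding catoni_gap_def t_def[symmetric]
    by (simp only: right_diff_distrib emp exp_diff exp_minus divide_inverse mult_minus_left)
  then have "(\<integral>\<^sup>+S. exp (catoni_gap lam S fs) \<partial>sample_measure n m D)
      = (\<integral>\<^sup>+S. ennreal (exp (lam * catoni_phi t (pooled_risk fs))) * ennreal (exp (- t * L S))
          \<partial>sample_measure n m D)"
    by (simp add: ennreal_mult)
  also have "\<dots> = ennreal (exp (lam * catoni_phi t (pooled_risk fs)))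
      * (\<integral>\<^sup>+S. ennreal (exp (- t * L S)) \<partial>sample_measure n m D)"
    by (rule nn_integral_cmult) measurable
  also have "\<dots> \<le> ennreal (exp (lam * catoni_phi t (pooled_risk fs)))
      * ennreal (\<Prod>i<n. (1 - r i + r i * exp (- t)) ^ m i)"
    unfolding L_def r_def using fs_i
    by (intro mult_left_mono nn_integral_sample_measure_exp_le[OF D_prob _ l_range])
      (auto simp: measurable_cong_sets[OF D_sets refl] loss_section_measurable)
  also have "\<dots> \<le> 1"
    using exp_catoni_mult_prod_chords_le_1[OF t, of r] expected_loss_unit_interval M_pos
    by (simp add: t_def r_def pooled_risk_def flip: ennreal_mult')
  finally show ?thesis .
qed

lemma catoni_gap_bounded:
  assumes "0 < lam"
  shows "\<bar>catoni_gap lam S fs\<bar> \<le> lam"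
  using catoni_phi_unit_interval[of "lam / M" "pooled_risk fs"] M_pos assms
    pooled_risk_unit_interval[of fs] pooled_emp_risk_unit_interval[of S fs]
  by (auto simp: catoni_gap_def abs_mult abs_le_iff)

lemma catoni_gap_measurable:
  assumes sets_N: "sets N = sets (X \<Otimes>\<^sub>M PiM {..<n} (\<lambda>_. MF))"
  shows "(\<lambda>(S, \<omega>). catoni_gap lam S (snd \<omega>)) \<in> borel_measurable (sample_measure n m D \<Otimes>\<^sub>M N)"
proof -
  have snd_N: "snd \<in> measurable N (PiM {..<n} (\<lambda>_. MF))"
    using measurable_snd[of X "PiM {..<n} (\<lambda>_. MF)"] by (simp cong: measurable_cong_sets add: sets_N)
  have "(\<lambda>p. (fst p, snd (snd p)))
      \<in> measurable (sample_measure n m D \<Otimes>\<^sub>M N) (sample_measure n m D \<Otimes>\<^sub>M PiM {..<n} (\<lambda>_. MF))"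
    using snd_N by measurable
  from measurable_compose[OF this pooled_emp_risk_measurable]
  have [measurable]: "(\<lambda>p. pooled_emp_risk (fst p) (snd (snd p))) \<in> borel_measurable (sample_measure n m D \<Otimes>\<^sub>M N)"
    by simp
  have [measurable]: "(\<lambda>p. pooled_risk (snd (snd p))) \<in> borel_measurable (sample_measure n m D \<Otimes>\<^sub>M N)"
    using measurable_compose[OF measurable_compose[OF measurable_snd snd_N] pooled_risk_measurable] .
  show ?thesis unfolding catoni_gap_def catoni_phi_def case_prod_beta by measurable
qed

lemma integral_pooled_risk:
  assumes HQ: "prob_space HQ" and Q: "\<And>i. i < n \<Longrightarrow> Q i \<in> space (prob_algebra MF)"
  shows "(\<integral>\<omega>. pooled_risk (snd \<omega>) \<partial>post_joint HQ n Q)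
    = (\<Sum>i<n. real (m i) / M * risk (l i) (D i) (Q i))"
proof -
  have Q_prob: "prob_space (Q i)" and Q_sets: "sets (Q i) = sets MF" if "i < n" for i
    using Q that by (auto simp: space_prob_algebra)
  have expected_loss_Q: "(\<lambda>f. \<integral>z. l i f z \<partial>D i) \<in> borel_measurable (Q i)" if "i < n" for i
    using expected_loss_measurable[OF that] by (simp cong: measurable_cong_sets add: Q_sets[OF that])
  have "integrable (post_joint HQ n Q) (\<lambda>\<omega>. \<integral>z. l i (snd \<omega> i) z \<partial>D i)" if "i < n" for i
    by (rule integrable_post_joint_component[where B=1])
      (use HQ Q_prob that expected_loss_Q expected_loss_unit_interval in auto)
  then have "(\<integral>\<omega>. pooled_risk (snd \<omega>) \<partial>post_joint HQ n Q)
      = (\<Sum>i<n. real (m i) / M * (\<integral>\<omega>. (\<integral>z. l i (snd \<omega> i) z \<partial>D i) \<partial>post_joint HQ n Q))"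
    unfolding pooled_risk_def by (subst Bochner_Integration.integral_sum) auto
  also have "\<dots> = (\<Sum>i<n. real (m i) / M * risk (l i) (D i) (Q i))"
  proof (intro sum.cong refl arg_cong2[where f = "(*)"])
    fix i assume "i \<in> {..<n}"
    then have i: "i < n" by simp
    have "(\<lambda>(f, z). l i f z) \<in> borel_measurable (Q i \<Otimes>\<^sub>M D i)"
      using loss_measurable_D[OF i]
      by (simp cong: measurable_cong_sets add: sets_pair_measure_cong[OF Q_sets[OF i] refl])
    then have "risk (l i) (D i) (Q i) = (\<integral>f. (\<integral>z. l i f z \<partial>D i) \<partial>Q i)"
      using l_range[OF i] by (intro risk_eq_integral_expected_loss[OF Q_prob[OF i] D_prob[OF i], where B=1]) auto
    also have "\<dots> = (\<integral>\<omega>. (\<integral>z. l i (snd \<omega> i) z \<partial>D i) \<partial>post_joint HQ n Q)"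
      by (rule integral_post_joint_component[where B=1, symmetric])
        (use HQ Q_prob i expected_loss_Q expected_loss_unit_interval in auto)
    finally show "(\<integral>\<omega>. (\<integral>z. l i (snd \<omega> i) z \<partial>D i) \<partial>post_joint HQ n Q) = risk (l i) (D i) (Q i)" ..
  qed
  finally show ?thesis .
qed

lemma integral_pooled_emp_risk:
  assumes HQ: "prob_space HQ" and Q: "\<And>i. i < n \<Longrightarrow> Q i \<in> space (prob_algebra MF)"
    and S: "S \<in> space (sample_measure n m D)"
  shows "(\<integral>\<omega>. pooled_emp_risk S (snd \<omega>) \<partial>post_joint HQ n Q)
    = (\<Sum>i<n. real (m i) / M * emp_risk (l i) (m i) (S i) (Q i))"
proof -
  have Q_prob: "prob_space (Q i)" and Q_sets: "sets (Q i) = sets MF" if "i < n" for i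
    using Q that by (auto simp: space_prob_algebra)
  have loss_at: "(\<lambda>f. l i f (S i j)) \<in> borel_measurable (Q i)" if "i < n" "j < m i" for i j
  proof -
    have "S i j \<in> space MZ" using measurable_space[OF sample_component_measurable[OF that] S] .
    then show ?thesis
      using measurable_Pair1[OF l_meas[OF \<open>i < n\<close>]] by (simp cong: measurable_cong_sets add: Q_sets that)
  qed
  have bounded: "\<bar>l i f z\<bar> \<le> 1" if "i < n" for i f z using l_range[OF that] by auto
  have integrable: "integrable (post_joint HQ n Q) (\<lambda>\<omega>. l i (snd \<omega> i) (S i j))"
    and integral: "(\<integral>\<omega>. l i (snd \<omega> i) (S i j) \<partial>post_joint HQ n Q) = (\<integral>f. l i f (S i j) \<partial>Q i)"
    if "i < n" "j < m i" for i j
    using integrable_post_joint_component[OF HQ Q_prob _ loss_at bounded]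
      integral_post_joint_component[OF HQ Q_prob _ loss_at bounded] that by auto
  have inner: "(\<integral>\<omega>. (\<Sum>j<m i. l i (snd \<omega> i) (S i j)) \<partial>post_joint HQ n Q)
      = (\<Sum>j<m i. \<integral>f. l i f (S i j) \<partial>Q i)" if "i < n" for i
    using integrable integral that by (subst Bochner_Integration.integral_sum) auto
  have "(\<integral>\<omega>. pooled_emp_risk S (snd \<omega>) \<partial>post_joint HQ n Q) = (\<Sum>i<n. \<integral>\<omega>.
      real (m i) / M * (1 / real (m i) * (\<Sum>j<m i. l i (snd \<omega> i) (S i j))) \<partial>post_joint HQ n Q)"
    unfolding pooled_emp_risk_def
    using integrable by (intro Bochner_Integration.integral_sum integrable_mult_right integrable_sum) auto
  also have "\<dots> = (\<Sum>i<n. real (m i) / M * (1 / real (m i) * (\<Sum>j<m i. \<integral>f. l i f (S i j) \<partial>Q i)))"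
    using inner by (intro sum.cong refl) (simp only: integral_mult_right_zero lessThan_iff)
  finally show ?thesis by (simp only: emp_risk_def rloss_def)
qed

lemma catoni_pooled_risk_le_integral:
  assumes lam: "0 < lam" and HQ: "prob_space HQ" and Q: "\<And>i. i < n \<Longrightarrow> Q i \<in> space (prob_algebra MF)"
    and S: "S \<in> space (sample_measure n m D)"
  shows "lam * (catoni_phi (lam / M) (\<Sum>i<n. real (m i) / M * risk (l i) (D i) (Q i))
      - (\<Sum>i<n. real (m i) / M * emp_risk (l i) (m i) (S i) (Q i)))
    \<le> (\<integral>\<omega>. catoni_gap lam S (snd \<omega>) \<partial>post_joint HQ n Q)"
proof -
  define t where "t = lam / M"
  have t: "0 < t" using lam M_pos by (simp add: t_def)
  let ?Post = "post_joint HQ n Q"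
  let ?R = "\<lambda>\<omega>. pooled_risk (snd \<omega>)" and ?E = "\<lambda>\<omega>. pooled_emp_risk S (snd \<omega>)"
  have Q_prob: "prob_space (Q i)" and Q_sets: "sets (Q i) = sets MF" if "i < n" for i
    using Q that by (auto simp: space_prob_algebra)
  interpret Post: prob_space ?Post by (rule prob_space_post_joint[OF HQ Q_prob])
  have snd_meas: "snd \<in> measurable ?Post (PiM {..<n} (\<lambda>_. MF))"
    by (rule measurable_snd_post_joint) (rule Q_sets)
  have R_meas: "?R \<in> borel_measurable ?Post"
    using measurable_compose[OF snd_meas pooled_risk_measurable] .
  have "(\<lambda>fs. pooled_emp_risk S fs) \<in> borel_measurable (PiM {..<n} (\<lambda>_. MF))"
    using measurable_Pair2[OF pooled_emp_risk_measurable S] by simp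
  then have [measurable]: "?E \<in> borel_measurable ?Post"
    by (rule measurable_compose[OF snd_meas])
  have int_E: "integrable ?Post ?E"
    by (rule Post.integrable_const_bound[where B=1]) (use pooled_emp_risk_unit_interval in auto)
  have int_phi: "integrable ?Post (\<lambda>\<omega>. catoni_phi t (?R \<omega>))"
    by (rule Post.integrable_catoni_phi[OF t R_meas]) (simp add: pooled_risk_unit_interval)
  have "catoni_phi t (\<integral>\<omega>. ?R \<omega> \<partial>?Post) \<le> (\<integral>\<omega>. catoni_phi t (?R \<omega>) \<partial>?Post)"
    by (rule Post.catoni_phi_integral_le[OF t R_meas]) (simp add: pooled_risk_unit_interval)
  then have "lam * (catoni_phi t (\<integral>\<omega>. ?R \<omega> \<partial>?Post) - (\<integral>\<omega>. ?E \<omega> \<partial>?Post))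
      \<le> lam * ((\<integral>\<omega>. catoni_phi t (?R \<omega>) \<partial>?Post) - (\<integral>\<omega>. ?E \<omega> \<partial>?Post))"
    using lam by simp
  also have "\<dots> = (\<integral>\<omega>. lam * (catoni_phi t (?R \<omega>) - ?E \<omega>) \<partial>?Post)"
    using int_phi int_E by simp
  finally show ?thesis
    by (simp add: catoni_gap_def t_def integral_pooled_risk[OF HQ Q] integral_pooled_emp_risk[OF HQ Q S])
qed

lemma pac_bayes_catoni_gap:
  assumes HP: "prob_space HP" and lam: "0 < lam" and delta: "0 < delta"
  shows "\<exists>A \<in> sets (sample_measure n m D). 1 - delta \<le> measure (sample_measure n m D) A \<and>
    (\<forall>S \<in> A. \<forall>Post. prob_space Post \<and> sets Post = sets (prior_joint MF HP n) \<longrightarrow>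
       ereal (\<integral>\<omega>. catoni_gap lam S (snd \<omega>) \<partial>Post)
         \<le> KL_div Post (prior_joint MF HP n) + ereal (ln (1 / delta)))"
proof (rule pac_bayes_from_exponential_moment[OF prob_space_sample_measure emeasure_prior_joint_le_1[OF HP]])
  show "(\<lambda>(S, \<omega>). catoni_gap lam S (snd \<omega>))
      \<in> borel_measurable (sample_measure n m D \<Otimes>\<^sub>M prior_joint MF HP n)"
    by (rule catoni_gap_measurable[OF sets_prior_joint[OF HP]])
  show "\<bar>catoni_gap lam S (snd \<omega>)\<bar> \<le> lam" for S \<omega>
    using lam by (rule catoni_gap_bounded)
  show "(\<integral>\<^sup>+S. exp (catoni_gap lam S (snd \<omega>)) \<partial>sample_measure n m D) \<le> 1"
    if "\<omega> \<in> space (prior_joint MF HP n)" for \<omega>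
  proof (rule nn_integral_exp_catoni_gap_le_1[OF lam])
    show "snd \<omega> \<in> space (PiM {..<n} (\<lambda>_. MF))"
      using that sets_eq_imp_space_eq[OF sets_prior_joint[OF HP]] by (auto simp: space_pair_measure)
  qed
qed (use delta in simp)

lemma catoni_bound_of_gap_bound:
  assumes lam: "0 < lam" and HQ: "prob_space HQ" and Q: "\<And>i. i < n \<Longrightarrow> Q i \<in> space (prob_algebra MF)"
    and S: "S \<in> space (sample_measure n m D)"
    and gap: "ereal (\<integral>\<omega>. catoni_gap lam S (snd \<omega>) \<partial>post_joint HQ n Q) \<le> K"
  defines "RS \<equiv> \<Sum>i<n. real (m i) / M * risk (l i) (D i) (Q i)"
    and "RSh \<equiv> \<Sum>i<n. real (m i) / M * emp_risk (l i) (m i) (S i) (Q i)"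
  shows "ereal (- (M / lam) * ln (1 - RS + RS * exp (- lam / M))) \<le> ereal RSh + K / ereal lam"
proof (rule ereal_le_plus_divide[OF lam])
  have "ereal (lam * (catoni_phi (lam / M) RS - RSh))
      \<le> ereal (\<integral>\<omega>. catoni_gap lam S (snd \<omega>) \<partial>post_joint HQ n Q)"
    unfolding RS_def RSh_def using catoni_pooled_risk_le_integral[OF lam HQ Q S] by simp
  then have "ereal (lam * (catoni_phi (lam / M) RS - RSh)) \<le> K"
    using gap by (rule order.trans)
  then show "ereal (lam * (- (M / lam) * ln (1 - RS + RS * exp (- lam / M)) - RSh)) \<le> K"
    by (simp only: catoni_phi_div)
qed

end

theorem theorem5:
  fixes MF :: "'f measure" and MZ :: "'z measure"
    and n :: nat and m :: "nat \<Rightarrow> nat"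
    and D :: "nat \<Rightarrow> 'z measure" and l :: "nat \<Rightarrow> 'f \<Rightarrow> 'z \<Rightarrow> real"
    and HP :: "'f measure measure"
    and delta lam :: real
  assumes n_pos: "n \<ge> 1"
    and m_pos: "\<And>i. i < n \<Longrightarrow> m i \<ge> 1"
    and D_prob: "\<And>i. i < n \<Longrightarrow> prob_space (D i)"
    and D_sets: "\<And>i. i < n \<Longrightarrow> sets (D i) = sets MZ"
    and l_meas: "\<And>i. i < n \<Longrightarrow> (\<lambda>(f, z). l i f z) \<in> borel_measurable (MF \<Otimes>\<^sub>M MZ)"
    and l_range: "\<And>i f z. i < n \<Longrightarrow> 0 \<le> l i f z \<and> l i f z \<le> 1"
    and HP_prob: "prob_space HP"
    and HP_sets: "sets HP = sets (prob_algebra MF)"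
    and delta_pos: "delta > 0"
    and lam_pos: "lam > 0"
  shows "\<exists>A \<in> sets (sample_measure n m D).
           measure (sample_measure n m D) A \<ge> 1 - delta \<and>
           (\<forall>S \<in> A. \<forall>HQ :: 'f measure measure. \<forall>Q :: nat \<Rightarrow> 'f measure.
              prob_space HQ \<and> sets HQ = sets (prob_algebra MF) \<and>
              (\<forall>i < n. Q i \<in> space (prob_algebra MF)) \<longrightarrow>
              (let M = real (\<Sum>i<n. m i);
                   RS = (\<Sum>i<n. real (m i) / M * risk (l i) (D i) (Q i));
                   RSh = (\<Sum>i<n. real (m i) / M * emp_risk (l i) (m i) (S i) (Q i))
               in ereal (- (M / lam) * ln (1 - RS + RS * exp (- lam / M)))
                  \<le> ereal RSh + (KL_div (post_joint HQ n Q) (prior_joint MF HP n)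
                                   + ereal (ln (1 / delta))) / ereal lam))"
proof -
  interpret multitask_learning MF MZ n m D l
    using n_pos m_pos D_prob D_sets l_meas l_range by (rule multitask_learning.intro)
  obtain A where A: "A \<in> sets (sample_measure n m D)" "1 - delta \<le> measure (sample_measure n m D) A"
    and gap: "\<And>S Post. S \<in> A \<Longrightarrow> prob_space Post \<Longrightarrow> sets Post = sets (prior_joint MF HP n) \<Longrightarrow>
      ereal (\<integral>\<omega>. catoni_gap lam S (snd \<omega>) \<partial>Post)
        \<le> KL_div Post (prior_joint MF HP n) + ereal (ln (1 / delta))"
    using pac_bayes_catoni_gap[OF HP_prob lam_pos delta_pos] by metis
  show ?thesis
  proof (intro bexI[OF _ A(1)] conjI A(2) ballI allI impI)
    fix S HQ and Q :: "nat \<Rightarrow> 'f measure"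
    assume S: "S \<in> A"
      and HQ: "prob_space HQ \<and> sets HQ = sets (prob_algebra MF) \<and> (\<forall>i<n. Q i \<in> space (prob_algebra MF))"
    have Q: "prob_space (Q i)" "sets (Q i) = sets MF" if "i < n" for i
      using HQ that by (auto simp: space_prob_algebra)
    have "sets (post_joint HQ n Q) = sets (prior_joint MF HP n)"
      using HQ Q by (simp add: sets_post_joint sets_prior_joint[OF HP_prob])
    then have "ereal (\<integral>\<omega>. catoni_gap lam S (snd \<omega>) \<partial>post_joint HQ n Q)
        \<le> KL_div (post_joint HQ n Q) (prior_joint MF HP n) + ereal (ln (1 / delta))"
      using S HQ Q by (intro gap prob_space_post_joint) auto
    moreover have "S \<in> space (sample_measure n m D)" using sets.sets_into_space[OF A(1)] S by blast
    ultimately show "let M = real (\<Sum>i<n. m i);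
        RS = \<Sum>i<n. real (m i) / M * risk (l i) (D i) (Q i);
        RSh = \<Sum>i<n. real (m i) / M * emp_risk (l i) (m i) (S i) (Q i)
      in ereal (- (M / lam) * ln (1 - RS + RS * exp (- lam / M)))
         \<le> ereal RSh + (KL_div (post_joint HQ n Q) (prior_joint MF HP n) + ereal (ln (1 / delta))) / ereal lam"
      unfolding Let_def using HQ by (intro catoni_bound_of_gap_bound[OF lam_pos]) auto
  qed
qed

end
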